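(* For an index $i\geq k$ (and $i<s$), the following hold: if $i<s-2$, then $\tilde\Lambda$ has no order-$i$ seeds; if $i=s-2$, then the only order-$i$ seed of $\tilde\Lambda$ is $\lambda_s+1$; if $i=s-1$, then the only order-$i$ seeds of $\tilde\Lambda$ are $\lambda_s+1$ and $\lambda_s+2$.
   Context: A numerical semigroup is a subset $\Lambda\subseteq\mathbb{N}_0$ containing $0$, closed under addition, with finite complement; its genus $g$ is the number of gaps (elements of $\mathbb{N}_0\setminus\Lambda$). Write $\Lambda=\{\lambda_i\}_{i\geq 0}$ with $0=\lambda_0<\lambda_1<\lambda_2<\cdots$; let $k$ be the smallest index with $\lambda_i=i+g$ for all $i\geq k$, and $c=\lambda_k=k+g$ the conductor. A generator of a numerical semigroup is a non-zero element that is not the sum of two non-zero elements of it. Fix an element $\lambda_s$ with $s\geq k$ that is a generator of $\Lambda$ (an order-zero seed), and let $\tilde\Lambda=\Lambda\setminus\{\lambda_s\}$, a numerical semigroup of genus $g+1$ with elements $\tilde\lambda_i=\lambda_i$ for $i<s$, $\tilde\lambda_i=\lambda_{i+1}$ for $i\geq s$, and conductor $\lambda_s+1$. For $0\leq i<s$, an order-$i$ seed of $\tilde\Lambda$ is an element $\lambda_t$ with $t>s$ such that $\lambda_t+\lambda_i$ is a generator of $\tilde\Lambda_i=\Lambda\setminus\{\lambda_1,\dots,\lambda_i,\lambda_s\}$. *)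

theory Defs
  imports Main "HOL-Library.Infinite_Set"
begin

definition numerical_semigroup :: "nat set \<Rightarrow> bool" where
  "numerical_semigroup L \<longleftrightarrow> 0 \<in> L \<and> (\<forall>a\<in>L. \<forall>b\<in>L. a + b \<in> L) \<and> finite (UNIV - L)"

text \<open>lambda_i: the i-th element of L in increasing order (lambda_0 = 0).\<close>
definition elem :: "nat set \<Rightarrow> nat \<Rightarrow> nat" where
  "elem L i = enumerate L i"

definition genus :: "nat set \<Rightarrow> nat" where
  "genus L = card (UNIV - L)"

definition cond_index :: "nat set \<Rightarrow> nat" where
  "cond_index L = (LEAST k. \<forall>i\<ge>k. elem L i = i + genus L)"

definition generator :: "nat set \<Rightarrow> nat \<Rightarrow> bool" where
  "generator L x \<longleftrightarrow> x \<in> L \<and> x \<noteq> 0 \<and>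
     \<not> (\<exists>a\<in>L. \<exists>b\<in>L. a \<noteq> 0 \<and> b \<noteq> 0 \<and> x = a + b)"

definition tilde_i :: "nat set \<Rightarrow> nat \<Rightarrow> nat \<Rightarrow> nat set" where
  "tilde_i L s i = L - ({elem L j | j. 1 \<le> j \<and> j \<le> i} \<union> {elem L s})"

text \<open>Order-i seeds of Lambda_tilde = Lambda minus {lambda_s}.\<close>
definition seeds :: "nat set \<Rightarrow> nat \<Rightarrow> nat \<Rightarrow> nat set" where
  "seeds L s i = {elem L t | t. t > s \<and> generator (tilde_i L s i) (elem L t + elem L i)}"

end

theory Submission
  imports Defs
begin

text \<open>Counting gaps shows \<open>\<lambda>\<^sub>j = j + g\<close> for \<open>j \<ge> k\<close>, so every integer above
  \<open>m = \<lambda>\<^sub>i\<close> lies in \<open>\<Lambda>\<close>, and removing \<open>\<lambda>\<^sub>1, \<dots>, \<lambda>\<^sub>i, \<lambda>\<^sub>s\<close> leaves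
  \<open>{0} \<union> (m, \<infinity>) - {S}\<close> with \<open>S = \<lambda>\<^sub>s = m + (s - i)\<close>. An order-\<open>i\<close> seed is then a
  \<open>y > S\<close> such that \<open>y + m\<close> is not a sum of two elements of \<open>(m, \<infinity>) - {S}\<close>. The splittings
  \<open>(m + 1) + (y - 1)\<close> and \<open>(m + 2) + (y - 2)\<close> avoid \<open>S\<close> unless \<open>S - m \<le> 2\<close> and \<open>y\<close> is
  within two of \<open>S\<close>, which leaves exactly the listed seeds.\<close>

lemma card_less_enumerate:
  fixes L :: "nat set"
  assumes "infinite L"
  shows "card {y \<in> L. y < enumerate L n} = n"
proof -
  have "{y \<in> L. y < enumerate L n} = enumerate L ` {..<n}"
  proof
    show "{y \<in> L. y < enumerate L n} \<subseteq> enumerate L ` {..<n}"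
      using assms by (auto dest: enumerate_Ex[OF assms])
  qed (use assms enumerate_in_set in auto)
  then show ?thesis
    using inj_enumerate[OF assms] by (simp add: card_image inj_on_subset)
qed

lemma enumerate_eq_add_card_gaps:
  fixes L :: "nat set"
  assumes "infinite L"
  shows "enumerate L n = n + card ({..<enumerate L n} - L)"
proof -
  let ?x = "enumerate L n"
  have "{..<?x} - L = {..<?x} - {y \<in> L. y < ?x}" by auto
  also have "card \<dots> = card {..<?x} - card {y \<in> L. y < ?x}"
    by (rule card_Diff_subset) auto
  finally have "card ({..<?x} - L) = ?x - n"
    by (simp add: card_less_enumerate[OF assms])
  then show ?thesis using le_enumerate[OF assms, of n] by simp
qed

lemma numerical_semigroup_infinite: "numerical_semigroup L \<Longrightarrow> infinite L"
  unfolding numerical_semigroup_def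
  by (metis Diff_infinite_finite infinite_UNIV_nat)

lemma elem_eventually_add_genus:
  assumes "numerical_semigroup L"
  shows "\<exists>k. \<forall>i\<ge>k. elem L i = i + genus L"
proof -
  have inf: "infinite L" using assms by (rule numerical_semigroup_infinite)
  obtain N where N: "UNIV - L \<subseteq> {..<N}"
    using assms finite_nat_bounded unfolding numerical_semigroup_def by blast
  have "elem L i = i + genus L" if "N \<le> i" for i
  proof -
    have "N \<le> enumerate L i" using le_enumerate[OF inf, of i] that by simp
    then have "UNIV - L \<subseteq> {..<enumerate L i}" using N by auto
    then have "{..<enumerate L i} - L = UNIV - L" by blast
    then show ?thesis
      using enumerate_eq_add_card_gaps[OF inf, of i] by (simp add: elem_def genus_def)
  qed
  then show ?thesis by blast
qed

lemma elem_eq_add_genus: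
  assumes "numerical_semigroup L" and "cond_index L \<le> i"
  shows "elem L i = i + genus L"
proof -
  have "\<forall>j \<ge> cond_index L. elem L j = j + genus L"
    unfolding cond_index_def using elem_eventually_add_genus[OF assms(1)] by (rule LeastI_ex)
  then show ?thesis using assms(2) by blast
qed

lemma greaterThan_elem_subset:
  assumes "numerical_semigroup L" and "cond_index L \<le> i"
  shows "{elem L i<..} \<subseteq> L"
proof
  fix x assume "x \<in> {elem L i<..}"
  then have "x > i + genus L" using elem_eq_add_genus[OF assms] by simp
  then have "elem L (x - genus L) = x"
    using elem_eq_add_genus[OF assms(1), of "x - genus L"] assms(2) by simp
  then show "x \<in> L"
    by (metis elem_def enumerate_in_set numerical_semigroup_infinite[OF assms(1)])
qed

lemma tilde_i_eq:
  fixes L :: "nat set"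
  assumes "infinite L" and "0 \<in> L" and "i < s" and "{elem L i<..} \<subseteq> L"
  shows "tilde_i L s i = insert 0 ({elem L i<..} - {elem L s})"
proof -
  have mono: "elem L a < elem L b \<longleftrightarrow> a < b" for a b
    using assms(1) by (simp add: elem_def)
  have elem_0: "elem L 0 = 0"
    using assms(2) by (simp add: elem_def enumerate_0)
  have below: "x \<in> elem L ` {..i}" if "x \<in> L" "x \<le> elem L i" for x
    using enumerate_Ex[OF assms(1) that(1)] that(2) mono by (force simp: elem_def not_less[symmetric])
  have "L - elem L ` {1..i} = insert 0 {elem L i<..}"
  proof (intro set_eqI iffI)
    fix x assume x: "x \<in> L - elem L ` {1..i}"
    show "x \<in> insert 0 {elem L i<..}"
    proof (cases "elem L i < x")
      case False
      then obtain j where "j \<le> i" "x = elem L j" using below[of x] x by auto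
      moreover from this have "j = 0" using x by auto
      ultimately show ?thesis using elem_0 by simp
    qed simp
  next
    fix x assume "x \<in> insert 0 {elem L i<..}"
    moreover have "elem L 0 < elem L j" "elem L j \<le> elem L i" if "j \<in> {1..i}" for j
      using that mono[of 0 j] mono[of i j] by auto
    ultimately show "x \<in> L - elem L ` {1..i}"
      using assms(2,4) elem_0 by fastforce
  qed
  moreover have "{elem L j | j. 1 \<le> j \<and> j \<le> i} = elem L ` {1..i}" by auto
  moreover have "elem L s \<noteq> 0"
    using elem_0 mono[of 0 s] assms(3) by simp
  ultimately show ?thesis
    unfolding tilde_i_def by blast
qed

lemma generator_insert_zero:
  assumes "0 \<notin> A"
  shows "generator (insert 0 A) x \<longleftrightarrow> x \<in> A \<and> \<not> (\<exists>a \<in> A. \<exists>b \<in> A. x = a + b)"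
  using assms unfolding generator_def by auto

definition tail_seeds :: "nat \<Rightarrow> nat \<Rightarrow> nat set" where
  "tail_seeds m S = {y. S < y \<and> \<not> (\<exists>a b. m < a \<and> m < b \<and> a \<noteq> S \<and> b \<noteq> S \<and> y + m = a + b)}"

lemma seeds_eq_tail_seeds:
  assumes "numerical_semigroup L" and "cond_index L \<le> i" and "i < s"
  shows "seeds L s i = tail_seeds (elem L i) (elem L s)"
proof -
  have inf: "infinite L" using assms(1) by (rule numerical_semigroup_infinite)
  have tail: "{elem L i<..} \<subseteq> L" using assms(1,2) by (rule greaterThan_elem_subset)
  have mono: "elem L a < elem L b \<longleftrightarrow> a < b" for a b
    using inf by (simp add: elem_def)
  have "elem L i < elem L s" using assms(3) mono by blast
  then have gen: "generator (tilde_i L s i) (y + elem L i) \<longleftrightarrow> y \<in> tail_seeds (elem L i) (elem L s)"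
    if "elem L s < y" for y
    using that tilde_i_eq[OF inf _ assms(3) tail] assms(1)
    by (auto simp: generator_insert_zero tail_seeds_def numerical_semigroup_def)
  have "seeds L s i = {y. elem L s < y \<and> generator (tilde_i L s i) (y + elem L i)}"
  proof (intro set_eqI iffI)
    fix y assume y: "y \<in> {y. elem L s < y \<and> generator (tilde_i L s i) (y + elem L i)}"
    then have "y \<in> L" using tail \<open>elem L i < elem L s\<close> by auto
    then obtain t where t: "elem L t = y" using enumerate_Ex[OF inf] by (auto simp: elem_def)
    then have "s < t" using y mono by auto
    then show "y \<in> seeds L s i" using y t unfolding seeds_def by auto
  qed (auto simp: seeds_def mono)
  then show ?thesis using gen tail_seeds_def by auto
qed

lemma tail_seeds_empty:
  assumes "m + 2 < S"
  shows "tail_seeds m S = {}"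
proof -
  have "\<exists>a b. m < a \<and> m < b \<and> a \<noteq> S \<and> b \<noteq> S \<and> y + m = a + b" if "S < y" for y
  proof (cases "y = S + 1")
    case True
    then show ?thesis using assms by (intro exI[of _ "m + 2"] exI[of _ "y - 2"]) auto
  next
    case False
    then show ?thesis using assms that by (intro exI[of _ "m + 1"] exI[of _ "y - 1"]) auto
  qed
  then show ?thesis unfolding tail_seeds_def by auto
qed

lemma tail_seeds_gap_two: "tail_seeds m (m + 2) = {m + 3}"
proof (intro set_eqI iffI)
  fix y assume y: "y \<in> tail_seeds m (m + 2)"
  show "y \<in> {m + 3}"
  proof (rule ccontr)
    assume "y \<notin> {m + 3}"
    then have "m + 3 < y" using y by (auto simp: tail_seeds_def)
    then have "\<exists>a b. m < a \<and> m < b \<and> a \<noteq> m + 2 \<and> b \<noteq> m + 2 \<and> y + m = a + b"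
      by (intro exI[of _ "m + 1"] exI[of _ "y - 1"]) auto
    then show False using y unfolding tail_seeds_def by blast
  qed
qed (auto simp: tail_seeds_def)

lemma tail_seeds_gap_one: "tail_seeds m (m + 1) = {m + 2, m + 3}"
proof (intro set_eqI iffI)
  fix y assume y: "y \<in> tail_seeds m (m + 1)"
  show "y \<in> {m + 2, m + 3}"
  proof (rule ccontr)
    assume "y \<notin> {m + 2, m + 3}"
    then have "m + 3 < y" using y by (auto simp: tail_seeds_def)
    then have "\<exists>a b. m < a \<and> m < b \<and> a \<noteq> m + 1 \<and> b \<noteq> m + 1 \<and> y + m = a + b"
      by (intro exI[of _ "m + 2"] exI[of _ "y - 2"]) auto
    then show False using y unfolding tail_seeds_def by blast
  qed
qed (auto simp: tail_seeds_def)

theorem lemma3: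
  fixes L :: "nat set" and s i :: nat
  assumes "numerical_semigroup L"
    and "cond_index L \<le> s"
    and "generator L (elem L s)"
    and "cond_index L \<le> i" and "i < s"
  shows "(i + 2 < s \<longrightarrow> seeds L s i = {})
       \<and> (i + 2 = s \<longrightarrow> seeds L s i = {elem L s + 1})
       \<and> (i + 1 = s \<longrightarrow> seeds L s i = {elem L s + 1, elem L s + 2})"
proof -
  \<comment> \<open>That \<open>\<lambda>\<^sub>s\<close> is a generator only makes \<open>\<Lambda> - {\<lambda>\<^sub>s}\<close> a semigroup.\<close>
  have seeds: "seeds L s i = tail_seeds (i + genus L) (s + genus L)"
    using seeds_eq_tail_seeds[OF assms(1,4,5)] elem_eq_add_genus[OF assms(1)] assms(2,4)
    by simp
  have "elem L s = s + genus L" using elem_eq_add_genus[OF assms(1,2)] .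
  then show ?thesis
    unfolding seeds using tail_seeds_empty tail_seeds_gap_two[of "i + genus L"]
      tail_seeds_gap_one[of "i + genus L"]
    by (auto simp: algebra_simps)
qed

end
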